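(* Let $\mathbb{K}$ be a non-Archimedean valued field with residue field $\mathfrak{r}$ such that $\chi(\mathbb{K}) = \chi(\mathfrak{r})$. Then for every topological group $G$ and every $n \geq 1$, the comparison map $c^n : H^n_{cb}(G, \mathbb{K}) \to H^n_c(G, \mathbb{K})$ is injective.
   Context: A non-Archimedean valued field is a field with an absolute value satisfying the ultrametric inequality; $\mathfrak{o}=\{|x|_\mathbb{K}\le1\}$, $\mathfrak{m}=\{|x|_\mathbb{K}<1\}$, $\mathfrak{r}=\mathfrak{o}/\mathfrak{m}$, $\chi$ = characteristic. $\mathbb{K}$ is a trivial $G$-module. Bar resolution: $\overline{C}^0=\mathbb{K}$, for $n\ge1$ $\overline{C}^n(G,\mathbb{K})$ = continuous maps $G^n\to\mathbb{K}$ and $\overline{C}^n_b(G,\mathbb{K})$ = bounded continuous ones, coboundary $\delta^nf(g_1,\dots,g_{n+1})=f(g_2,\dots,g_{n+1})+\sum_{i=1}^n(-1)^if(g_1,\dots,g_ig_{i+1},\dots,g_{n+1})+(-1)^{n+1}f(g_1,\dots,g_n)$. $H^\bullet_c$ and $H^\bullet_{cb}$ are the cohomologies of these complexes, and the comparison map is induced by inclusion. *)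

theory Defs
  imports "HOL-Analysis.Analysis" "HOL-Algebra.Group"
begin

definition nonarch_abs :: "('k::field \<Rightarrow> real) \<Rightarrow> bool" where
  "nonarch_abs av \<longleftrightarrow>
     (\<forall>x. 0 \<le> av x) \<and> (\<forall>x. av x = 0 \<longleftrightarrow> x = 0) \<and>
     (\<forall>x y. av (x * y) = av x * av y) \<and>
     (\<forall>x y. av (x + y) \<le> max (av x) (av y))"

text \<open>Characteristic of the residue field o/m: defined exactly as CHAR for the
  ring o/m, i.e. the Gcd of all n with n*1 = 0 in o/m, i.e. n*1 in m.\<close>
definition residue_char :: "('k::field \<Rightarrow> real) \<Rightarrow> nat" where
  "residue_char av = Gcd {n::nat. av (of_nat n :: 'k) < 1}"

definition topological_group :: "('g, 'b) monoid_scheme \<Rightarrow> 'g topology \<Rightarrow> bool" where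
  "topological_group G T \<longleftrightarrow> group G \<and> topspace T = carrier G \<and>
     continuous_map (prod_topology T T) T (\<lambda>(x, y). x \<otimes>\<^bsub>G\<^esub> y) \<and>
     continuous_map T T (\<lambda>x. inv\<^bsub>G\<^esub> x)"

definition Gpow :: "'g topology \<Rightarrow> nat \<Rightarrow> (nat \<Rightarrow> 'g) topology" where
  "Gpow T n = product_topology (\<lambda>_. T) {..<n}"

definition cont_into :: "('k::field \<Rightarrow> real) \<Rightarrow> 'a topology \<Rightarrow> ('a \<Rightarrow> 'k) \<Rightarrow> bool" where
  "cont_into av X f \<longleftrightarrow>
     (\<forall>x\<in>topspace X. \<forall>e>0. \<exists>U. openin X U \<and> x \<in> U \<and>
        (\<forall>y\<in>U. av (f y - f x) < e))"

definition Cc :: "('k::field \<Rightarrow> real) \<Rightarrow> 'g topology \<Rightarrow> nat \<Rightarrow> ((nat \<Rightarrow> 'g) \<Rightarrow> 'k) set" where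
  "Cc av T n = {f. cont_into av (Gpow T n) f \<and> (\<forall>x. x \<notin> topspace (Gpow T n) \<longrightarrow> f x = 0)}"

definition Cb :: "('k::field \<Rightarrow> real) \<Rightarrow> 'g topology \<Rightarrow> nat \<Rightarrow> ((nat \<Rightarrow> 'g) \<Rightarrow> 'k) set" where
  "Cb av T n = {f \<in> Cc av T n. \<exists>B. \<forall>x\<in>topspace (Gpow T n). av (f x) \<le> B}"

text \<open>Merging positions i-1 and i (1 \<le> i \<le> n) of a tuple (g_1,...,g_{n+1}), 0-indexed.\<close>
definition merge_at :: "('g, 'b) monoid_scheme \<Rightarrow> nat \<Rightarrow> nat \<Rightarrow> (nat \<Rightarrow> 'g) \<Rightarrow> (nat \<Rightarrow> 'g)" where
  "merge_at G n i g = restrict (\<lambda>j. if j < i - 1 then g j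
                                    else if j = i - 1 then g (i - 1) \<otimes>\<^bsub>G\<^esub> g i
                                    else g (Suc j)) {..<n}"

text \<open>The coboundary delta^n : C^n \<rightarrow> C^(n+1) of the bar resolution (trivial coefficients).\<close>
definition delta :: "('g, 'b) monoid_scheme \<Rightarrow> 'g topology \<Rightarrow> nat \<Rightarrow> ((nat \<Rightarrow> 'g) \<Rightarrow> 'k::field) \<Rightarrow> ((nat \<Rightarrow> 'g) \<Rightarrow> 'k)" where
  "delta G T n f = (\<lambda>g. if g \<in> topspace (Gpow T (Suc n)) then
       f (restrict (\<lambda>j. g (Suc j)) {..<n})
       + (\<Sum>i=1..n. (-1) ^ i * f (merge_at G n i g))
       + (-1) ^ (Suc n) * f (restrict g {..<n})
     else 0)"

definition Zc where "Zc av G T n = {f \<in> Cc av T n. delta G T n f = (\<lambda>_. 0)}"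
definition Zb where "Zb av G T n = {f \<in> Cb av T n. delta G T n f = (\<lambda>_. 0)}"

text \<open>Coboundaries in degree n \<ge> 1.\<close>
definition Bc where "Bc av G T n = (\<lambda>h. delta G T (n - 1) h) ` Cc av T (n - 1)"
definition Bb where "Bb av G T n = (\<lambda>h. delta G T (n - 1) h) ` Cb av T (n - 1)"

definition cls_c where "cls_c av G T n f = {g \<in> Zc av G T n. f - g \<in> Bc av G T n}"
definition cls_b where "cls_b av G T n f = {g \<in> Zb av G T n. f - g \<in> Bb av G T n}"

definition Hc where "Hc av G T n = cls_c av G T n ` Zc av G T n"
definition Hcb where "Hcb av G T n = cls_b av G T n ` Zb av G T n"

definition comparison where
  "comparison av G T n C = cls_c av G T n (SOME f. f \<in> C)"

end

theory Submission
  imports Defs "HOL-Library.Function_Algebras"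
begin

text \<open>
  Since K and its residue field have the same characteristic, every integer that is nonzero in
  K has absolute value 1. Hence the prime subfield F of K lies in the valuation ring, every
  closed ball \<open>{x. |x| \<le> R}\<close> is an F-subspace of K, and projecting along a complementary
  subspace gives an additive retraction P of K onto the ball. If a bounded cocycle is a
  continuous coboundary \<open>\<delta>h\<close> with values in that ball, then \<open>P \<circ> h\<close> is a bounded cochain,
  still continuous because P is additive and the identity near 0, and
  \<open>\<delta>(P \<circ> h) = P \<circ> \<delta>h = \<delta>h\<close> because \<open>\<delta>\<close> is built from sums and signs.
\<close>

definition prime_subfield :: "'k::field set" where
  "prime_subfield = {x. \<exists>a b. x = of_int a / of_int b}"

lemma prime_subfield_of_int_divide [intro]: "of_int a / of_int b \<in> prime_subfield"
  unfolding prime_subfield_def by blast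

lemma prime_subfield_cases:
  assumes "x \<in> prime_subfield"
  obtains a b where "x = of_int a / of_int b"
  using assms unfolding prime_subfield_def by blast

lemma prime_subfield_0: "0 \<in> prime_subfield"
  using prime_subfield_of_int_divide[of 0 1] by simp

lemma prime_subfield_1: "1 \<in> prime_subfield"
  using prime_subfield_of_int_divide[of 1 1] by simp

lemma prime_subfield_uminus: "x \<in> prime_subfield \<Longrightarrow> - x \<in> prime_subfield"
  by (elim prime_subfield_cases) (metis minus_divide_left of_int_minus prime_subfield_of_int_divide)

lemma prime_subfield_times:
  "x \<in> prime_subfield \<Longrightarrow> y \<in> prime_subfield \<Longrightarrow> x * y \<in> prime_subfield"
  by (elim prime_subfield_cases) (metis of_int_mult times_divide_times_eq prime_subfield_of_int_divide)

lemma prime_subfield_inverse: "x \<in> prime_subfield \<Longrightarrow> inverse x \<in> prime_subfield"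
  by (elim prime_subfield_cases) (metis inverse_divide prime_subfield_of_int_divide)

lemma prime_subfield_divide:
  "x \<in> prime_subfield \<Longrightarrow> y \<in> prime_subfield \<Longrightarrow> x / y \<in> prime_subfield"
  by (simp add: divide_inverse prime_subfield_times prime_subfield_inverse)

lemma prime_subfield_plus:
  assumes "x \<in> prime_subfield" and "y \<in> prime_subfield"
  shows "x + y \<in> prime_subfield"
proof -
  obtain a b c d where x: "x = of_int a / of_int b" and y: "y = of_int c / of_int d"
    using assms by (elim prime_subfield_cases)
  show ?thesis
  proof (cases "(of_int b :: 'a) = 0 \<or> (of_int d :: 'a) = 0")
    case True
    then show ?thesis using assms x y by auto
  next
    case False
    then have "x + y = of_int (a * d + c * b) / of_int (b * d)"
      unfolding x y by (simp add: field_simps)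
    then show ?thesis by (metis prime_subfield_of_int_divide)
  qed
qed

lemma prime_subfield_minus:
  "x \<in> prime_subfield \<Longrightarrow> y \<in> prime_subfield \<Longrightarrow> x - y \<in> prime_subfield"
  using prime_subfield_plus[of x "- y"] prime_subfield_uminus[of y] by simp

text \<open>\<open>Vector_Spaces\<close> takes its scalars from a type, so the prime subfield is made into one.\<close>

typedef (overloaded) 'k prime_field = "prime_subfield :: 'k::field set"
  morphisms rep_prime_field abs_prime_field
  using prime_subfield_0 by blast

setup_lifting type_definition_prime_field

instantiation prime_field :: (field) field
begin
lift_definition zero_prime_field :: "'a prime_field" is 0 by (rule prime_subfield_0)
lift_definition one_prime_field :: "'a prime_field" is 1 by (rule prime_subfield_1)
lift_definition plus_prime_field :: "'a prime_field \<Rightarrow> 'a prime_field \<Rightarrow> 'a prime_field"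
  is "(+)" by (rule prime_subfield_plus)
lift_definition minus_prime_field :: "'a prime_field \<Rightarrow> 'a prime_field \<Rightarrow> 'a prime_field"
  is "(-)" by (rule prime_subfield_minus)
lift_definition times_prime_field :: "'a prime_field \<Rightarrow> 'a prime_field \<Rightarrow> 'a prime_field"
  is "(*)" by (rule prime_subfield_times)
lift_definition divide_prime_field :: "'a prime_field \<Rightarrow> 'a prime_field \<Rightarrow> 'a prime_field"
  is "(/)" by (rule prime_subfield_divide)
lift_definition uminus_prime_field :: "'a prime_field \<Rightarrow> 'a prime_field"
  is uminus by (rule prime_subfield_uminus)
lift_definition inverse_prime_field :: "'a prime_field \<Rightarrow> 'a prime_field"
  is inverse by (rule prime_subfield_inverse)
instance
  by standard (transfer; simp add: algebra_simps divide_inverse)+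
end

locale nonarch_valued_field =
  fixes av :: "'k::field \<Rightarrow> real"
  assumes nonarch: "nonarch_abs av"
begin

lemma av_nonneg: "0 \<le> av x"
  and av_eq_0_iff [simp]: "av x = 0 \<longleftrightarrow> x = 0"
  and av_mult: "av (x * y) = av x * av y"
  and av_add_le_max: "av (x + y) \<le> max (av x) (av y)"
  using nonarch unfolding nonarch_abs_def by auto

lemma av_0 [simp]: "av 0 = 0"
  by simp

lemma av_1 [simp]: "av 1 = 1"
  using av_mult[of 1 1] av_eq_0_iff[of 1] by simp

lemma av_minus [simp]: "av (- x) = av x"
proof -
  have "av (-1) * av (-1) = 1"
    using av_mult[of "-1" "-1"] by simp
  then have "av (-1) = 1"
    using av_nonneg[of "-1"] by (metis abs_of_nonneg abs_square_eq_1 power2_eq_square)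
  then show ?thesis
    using av_mult[of "-1" x] by simp
qed

lemma av_diff_le_max: "av (x - y) \<le> max (av x) (av y)"
  using av_add_le_max[of x "- y"] by simp

lemma av_of_nat_le_1: "av (of_nat n) \<le> 1"
proof (induction n)
  case (Suc n)
  then show ?case using av_add_le_max[of 1 "of_nat n"] by simp
qed simp

lemma av_of_int_eq_av_of_nat: "av (of_int a) = av (of_nat (nat \<bar>a\<bar>))"
proof (cases "a \<ge> 0")
  case False
  then have "(of_int a :: 'k) = - of_nat (nat \<bar>a\<bar>)" by simp
  then show ?thesis by simp
qed simp

lemma av_of_int_le_1: "av (of_int a) \<le> 1"
  using av_of_int_eq_av_of_nat[of a] av_of_nat_le_1[of "nat \<bar>a\<bar>"] by argo

end

locale equal_char_valued_field = nonarch_valued_field av for av :: "'k::field \<Rightarrow> real" +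
  assumes char_eq: "CHAR('k) = residue_char av"
begin

lemma av_of_nat_eq_1:
  assumes "(of_nat n :: 'k) \<noteq> 0"
  shows "av (of_nat n) = 1"
proof (rule ccontr)
  assume "av (of_nat n) \<noteq> 1"
  with av_of_nat_le_1 have "av (of_nat n) < 1"
    by (simp add: order_less_le)
  then have "residue_char av dvd n"
    unfolding residue_char_def by (simp add: Gcd_dvd)
  then have "(of_nat n :: 'k) = 0"
    by (simp add: char_eq of_nat_eq_0_iff_char_dvd)
  with assms show False by simp
qed

lemma av_of_int_eq_1:
  assumes "(of_int a :: 'k) \<noteq> 0"
  shows "av (of_int a) = 1"
proof -
  have "(of_nat (nat \<bar>a\<bar>) :: 'k) \<noteq> 0"
    using assms by (cases "a \<ge> 0") simp_all
  then show ?thesis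
    by (metis av_of_int_eq_av_of_nat av_of_nat_eq_1)
qed

lemma av_prime_subfield_le_1:
  assumes "x \<in> prime_subfield"
  shows "av x \<le> 1"
proof -
  obtain a b where x: "x = (of_int a :: 'k) / of_int b"
    using assms by (elim prime_subfield_cases)
  show ?thesis
  proof (cases "(of_int b :: 'k) = 0")
    case True
    then show ?thesis using x by simp
  next
    case False
    then have "av x = av (of_int a)"
      using av_mult[of x "of_int b"] x av_of_int_eq_1 by simp
    also have "\<dots> \<le> 1"
      by (rule av_of_int_le_1)
    finally show ?thesis .
  qed
qed

lemma additive_retraction_onto_ball:
  assumes "0 \<le> R"
  obtains P where "Modules.additive P" and "\<And>x. av x \<le> R \<Longrightarrow> P x = x" and "\<And>x. av (P x) \<le> R"
proof -
  define scale :: "'k prime_field \<Rightarrow> 'k \<Rightarrow> 'k" where "scale c x = rep_prime_field c * x" for c x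
  interpret vs: vector_space scale
    by unfold_locales (simp_all add: scale_def plus_prime_field.rep_eq times_prime_field.rep_eq
        one_prime_field.rep_eq distrib_left distrib_right)
  interpret vp: vector_space_pair scale scale ..
  define ball where "ball = {x. av x \<le> R}"
  have ball_subspace: "vs.subspace ball"
  proof (rule vs.subspaceI)
    show "0 \<in> ball" using assms unfolding ball_def by simp
    show "x + y \<in> ball" if "x \<in> ball" "y \<in> ball" for x y
      using that av_add_le_max[of x y] unfolding ball_def by auto
    show "scale c x \<in> ball" if "x \<in> ball" for c x
    proof -
      have "av (rep_prime_field c) \<le> 1"
        using av_prime_subfield_le_1 rep_prime_field by blast
      then have "av (rep_prime_field c) * av x \<le> 1 * av x"
        using av_nonneg by (rule mult_right_mono)
      then show ?thesis
        using that unfolding ball_def scale_def by (simp add: av_mult)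
    qed
  qed
  obtain B where B: "B \<subseteq> ball" "vs.independent B" "ball \<subseteq> vs.span B"
    using vs.maximal_independent_subset[of ball] by blast
  then have span_B: "vs.span B = ball"
    using vs.span_minimal[OF B(1) ball_subspace] by blast
  \<comment> \<open>The identity on B, extended by zero on a complement of the ball.\<close>
  define P where "P = vp.construct B id"
  have lin: "Vector_Spaces.linear scale scale P"
    unfolding P_def by (rule vp.linear_construct[OF B(2)])
  show ?thesis
  proof (rule that)
    show "Modules.additive P"
      using lin unfolding Vector_Spaces.linear_iff Modules.additive_def by blast
    show "P x = x" if "av x \<le> R" for x
    proof -
      have "x \<in> vs.span B" using that span_B unfolding ball_def by blast
      moreover have "P b = id b" if "b \<in> B" for b
        unfolding P_def by (rule vp.construct_basis[OF B(2) that])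
      ultimately show ?thesis
        using vp.linear_eq_on[OF lin vs.linear_id] by simp
    qed
    show "av (P x) \<le> R" for x
      using vp.construct_in_span[OF B(2), of id] span_B unfolding P_def ball_def by auto
  qed
qed

end

lemma additive_signed:
  fixes f :: "'a::ring_1 \<Rightarrow> 'b::ring_1"
  assumes "Modules.additive f"
  shows "f ((-1) ^ i * y) = (-1) ^ i * f y"
  by (cases "even i") (simp_all add: additive.minus[OF assms])

lemma delta_comp_additive:
  assumes "Modules.additive P"
  shows "delta G T m (\<lambda>x. P (h x)) = (\<lambda>g. P (delta G T m h g))"
proof -
  interpret Modules.additive P by fact
  show ?thesis
    unfolding delta_def by (rule ext) (simp add: sum add diff additive_signed[OF assms] zero)
qed

lemma delta_diff: "delta G T m (h1 - h2) = delta G T m h1 - (delta G T m h2 :: _ \<Rightarrow> 'k::field)"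
  unfolding delta_def by (rule ext) (simp add: sum_subtractf algebra_simps)

lemma delta_zero: "delta G T m 0 = (0 :: _ \<Rightarrow> 'k::field)"
  unfolding delta_def by (rule ext) simp

context nonarch_valued_field
begin

lemma cont_into_diff:
  assumes "cont_into av X f" and "cont_into av X g"
  shows "cont_into av X (f - g)"
  unfolding cont_into_def
proof (intro ballI allI impI)
  fix x e assume x: "x \<in> topspace X" and e: "(0::real) < e"
  obtain U where U: "openin X U" "x \<in> U" "\<forall>y\<in>U. av (f y - f x) < e"
    using assms(1) x e unfolding cont_into_def by blast
  obtain V where V: "openin X V" "x \<in> V" "\<forall>y\<in>V. av (g y - g x) < e"
    using assms(2) x e unfolding cont_into_def by blast
  have "av ((f - g) y - (f - g) x) < e" if "y \<in> U \<inter> V" for y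
  proof -
    have eq: "(f - g) y - (f - g) x = (f y - f x) - (g y - g x)" by simp
    have "max (av (f y - f x)) (av (g y - g x)) < e"
      using U V that by auto
    then have "av ((f y - f x) - (g y - g x)) < e"
      by (rule le_less_trans[OF av_diff_le_max])
    then show ?thesis by (simp only: eq)
  qed
  moreover have "openin X (U \<inter> V)"
    using U(1) V(1) by (rule openin_Int)
  ultimately show "\<exists>W. openin X W \<and> x \<in> W \<and> (\<forall>y\<in>W. av ((f - g) y - (f - g) x) < e)"
    using U(2) V(2) by blast
qed

lemma cont_into_comp_additive:
  assumes "cont_into av X f" and "Modules.additive P" and "0 < r" and "\<And>x. av x \<le> r \<Longrightarrow> P x = x"
  shows "cont_into av X (\<lambda>x. P (f x))"
  unfolding cont_into_def
proof (intro ballI allI impI)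
  interpret Modules.additive P by fact
  fix x e assume x: "x \<in> topspace X" and e: "(0::real) < e"
  have "0 < min e r" using e assms(3) by simp
  then obtain U where U: "openin X U" "x \<in> U" "\<forall>y\<in>U. av (f y - f x) < min e r"
    using assms(1) x unfolding cont_into_def by blast
  have "P (f y) - P (f x) = f y - f x" if "y \<in> U" for y
  proof -
    have "P (f y) - P (f x) = P (f y - f x)" by (simp add: diff)
    also have "\<dots> = f y - f x"
      using U(3) that by (intro assms(4)) (simp add: less_imp_le)
    finally show ?thesis .
  qed
  then show "\<exists>U. openin X U \<and> x \<in> U \<and> (\<forall>y\<in>U. av (P (f y) - P (f x)) < e)"
    using U by auto
qed

lemma zero_in_Cb: "0 \<in> Cb av T m"
  unfolding Cb_def Cc_def cont_into_def by (auto intro!: exI[of _ "topspace (Gpow T m)"])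

lemma Cb_subset_Cc: "Cb av T m \<subseteq> Cc av T m"
  unfolding Cb_def by blast

lemma zero_in_Cc: "0 \<in> Cc av T m"
  using zero_in_Cb Cb_subset_Cc by blast

lemma Cb_bounded:
  assumes "f \<in> Cb av T m"
  obtains B where "\<And>x. av (f x) \<le> B"
proof -
  obtain B where B: "\<forall>x\<in>topspace (Gpow T m). av (f x) \<le> B"
    using assms unfolding Cb_def by blast
  have vanish: "f x = 0" if "x \<notin> topspace (Gpow T m)" for x
    using assms that unfolding Cb_def Cc_def by blast
  have "av (f x) \<le> max B 0" for x
    by (cases "x \<in> topspace (Gpow T m)") (use B vanish in \<open>auto simp: le_max_iff_disj\<close>)
  then show ?thesis by (rule that)
qed

lemma Cb_diff:
  assumes "f \<in> Cb av T m" and "g \<in> Cb av T m"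
  shows "f - g \<in> Cb av T m"
proof -
  obtain Bf where Bf: "\<And>x. av (f x) \<le> Bf"
    using Cb_bounded[OF assms(1)] by blast
  obtain Bg where Bg: "\<And>x. av (g x) \<le> Bg"
    using Cb_bounded[OF assms(2)] by blast
  have "av ((f - g) x) \<le> max Bf Bg" for x
  proof -
    have "av (f x - g x) \<le> max (av (f x)) (av (g x))"
      by (rule av_diff_le_max)
    also have "\<dots> \<le> max Bf Bg"
      using Bf Bg by (rule max.mono)
    finally show ?thesis by simp
  qed
  moreover have "cont_into av (Gpow T m) (f - g)"
    using assms cont_into_diff unfolding Cb_def Cc_def by blast
  moreover have "(f - g) x = 0" if "x \<notin> topspace (Gpow T m)" for x
    using assms that unfolding Cb_def Cc_def by simp
  ultimately show ?thesis
    unfolding Cb_def Cc_def by blast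
qed

lemma Bb_diff:
  assumes "u \<in> Bb av G T n" and "v \<in> Bb av G T n"
  shows "u - v \<in> Bb av G T n"
proof -
  obtain h k where "h \<in> Cb av T (n - 1)" "k \<in> Cb av T (n - 1)"
    and "u = delta G T (n - 1) h" "v = delta G T (n - 1) k"
    using assms unfolding Bb_def by blast
  then have "u - v = delta G T (n - 1) (h - k)" and "h - k \<in> Cb av T (n - 1)"
    by (simp_all add: delta_diff Cb_diff)
  then show ?thesis unfolding Bb_def by (rule image_eqI)
qed

lemma zero_in_Bb: "0 \<in> Bb av G T n"
  unfolding Bb_def by (rule image_eqI[where x = 0]) (simp_all add: delta_zero zero_in_Cb)

lemma zero_in_Bc: "0 \<in> Bc av G T n"
  unfolding Bc_def
  by (rule image_eqI[where x = 0]) (simp_all add: delta_zero zero_in_Cc)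

lemma cls_b_eq:
  assumes "f - f' \<in> Bb av G T n"
  shows "cls_b av G T n f' = cls_b av G T n f"
proof -
  have swapped: "f' - f \<in> Bb av G T n"
    using Bb_diff[OF zero_in_Bb assms] by simp
  have "f - g \<in> Bb av G T n \<longleftrightarrow> f' - g \<in> Bb av G T n" for g
  proof
    assume "f - g \<in> Bb av G T n"
    from Bb_diff[OF this assms] show "f' - g \<in> Bb av G T n" by (simp add: algebra_simps)
  next
    assume "f' - g \<in> Bb av G T n"
    from Bb_diff[OF this swapped] show "f - g \<in> Bb av G T n" by (simp add: algebra_simps)
  qed
  then show ?thesis unfolding cls_b_def by blast
qed

lemma some_in_Hcb:
  assumes "C \<in> Hcb av G T n"
  shows "(SOME f. f \<in> C) \<in> Zb av G T n" and "cls_b av G T n (SOME f. f \<in> C) = C"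
proof -
  obtain f where f: "f \<in> Zb av G T n" and C: "C = cls_b av G T n f"
    using assms unfolding Hcb_def by auto
  define f0 where "f0 = (SOME f. f \<in> C)"
  have "f \<in> C" using f zero_in_Bb unfolding C cls_b_def by simp
  then have "f0 \<in> C" unfolding f0_def by (rule someI[where P = "\<lambda>f. f \<in> C"])
  then have "f0 \<in> Zb av G T n" and "f - f0 \<in> Bb av G T n"
    unfolding C cls_b_def by auto
  then show "(SOME f. f \<in> C) \<in> Zb av G T n"
    and "cls_b av G T n (SOME f. f \<in> C) = C"
    unfolding f0_def[symmetric] using cls_b_eq[of f f0] by (simp_all add: C)
qed

lemma Zb_subset_Zc: "Zb av G T n \<subseteq> Zc av G T n"
  unfolding Zb_def Zc_def using Cb_subset_Cc by blast

lemma cls_c_eq_imp_diff_in_Bc: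
  assumes "f \<in> Zc av G T n" and "cls_c av G T n f = cls_c av G T n g"
  shows "g - f \<in> Bc av G T n"
proof -
  have "f \<in> cls_c av G T n f"
    using assms(1) zero_in_Bc unfolding cls_c_def by simp
  then show ?thesis
    using assms(2) unfolding cls_c_def by simp
qed

end

context equal_char_valued_field
begin

lemma bounded_coboundary_in_delta_Cb:
  assumes h: "h \<in> Cc av T m" and bounded: "\<And>x. av (delta G T m h x) \<le> B"
  shows "delta G T m h \<in> delta G T m ` Cb av T m"
proof -
  define R where "R = max B 1"
  have R_pos: "0 < R" unfolding R_def by (simp add: less_max_iff_disj)
  then obtain P where P: "Modules.additive P" and fix_ball: "\<And>x. av x \<le> R \<Longrightarrow> P x = x"
    and into_ball: "\<And>x. av (P x) \<le> R"
    using additive_retraction_onto_ball less_imp_le by blast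
  interpret Modules.additive P by fact
  have "cont_into av (Gpow T m) (\<lambda>x. P (h x))"
    using h cont_into_comp_additive[OF _ P R_pos fix_ball] unfolding Cc_def by blast
  then have bounded_primitive: "(\<lambda>x. P (h x)) \<in> Cb av T m"
    using h into_ball unfolding Cb_def Cc_def by (auto simp: zero)
  have "P (delta G T m h g) = delta G T m h g" for g
    by (rule fix_ball) (use bounded[of g] in \<open>simp add: R_def\<close>)
  then have "delta G T m h = delta G T m (\<lambda>x. P (h x))"
    by (simp add: delta_comp_additive[OF P])
  then show ?thesis using bounded_primitive by (rule image_eqI)
qed

lemma bounded_Bc_in_Bb:
  assumes "u \<in> Bc av G T n" and "\<And>x. av (u x) \<le> B"
  shows "u \<in> Bb av G T n"
proof -
  obtain h where "h \<in> Cc av T (n - 1)" and "u = delta G T (n - 1) h"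
    using assms(1) unfolding Bc_def by blast
  then show ?thesis
    unfolding Bb_def using bounded_coboundary_in_delta_Cb[of h T "n - 1" G B] assms(2) by simp
qed

end

theorem theorem9p41:
  fixes av :: "'k::field \<Rightarrow> real"
    and G :: "('g, 'b) monoid_scheme" and T :: "'g topology" and n :: nat
  assumes "nonarch_abs av"
    and "CHAR('k) = residue_char av"
    and "topological_group G T"
    and "n \<ge> 1"
  shows "inj_on (comparison av G T n) (Hcb av G T n)"
proof (rule inj_onI)
  interpret equal_char_valued_field av
    using assms(1,2) by unfold_locales
  fix C1 C2 assume C1: "C1 \<in> Hcb av G T n" and C2: "C2 \<in> Hcb av G T n"
    and eq: "comparison av G T n C1 = comparison av G T n C2"
  define f1 where "f1 = (SOME f. f \<in> C1)"
  define f2 where "f2 = (SOME f. f \<in> C2)"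
  have f1: "f1 \<in> Zb av G T n" "cls_b av G T n f1 = C1"
    and f2: "f2 \<in> Zb av G T n" "cls_b av G T n f2 = C2"
    using some_in_Hcb C1 C2 unfolding f1_def f2_def by blast+
  have "cls_c av G T n f1 = cls_c av G T n f2"
    using eq unfolding comparison_def f1_def f2_def .
  with Zb_subset_Zc f1(1) have in_Bc: "f2 - f1 \<in> Bc av G T n"
    by (blast intro: cls_c_eq_imp_diff_in_Bc)
  have "f2 - f1 \<in> Cb av T n"
    using f1(1) f2(1) unfolding Zb_def by (blast intro: Cb_diff)
  then obtain B where "\<And>x. av ((f2 - f1) x) \<le> B"
    using Cb_bounded by blast
  with in_Bc have "f2 - f1 \<in> Bb av G T n"
    by (rule bounded_Bc_in_Bb)
  from cls_b_eq[OF this] show "C1 = C2"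
    using f1(2) f2(2) by simp
qed

end
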